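(* Let $U\subset\mathbb{R}^2$ be open, let $x:U\to\mathbb{R}^3$ be smooth, let $\xi:U\to S^2$ be a proper frontal, let $\Omega$ be a tangent moving basis of $\xi$ with $D\xi=\Omega\Delta_\Omega^T$, $\Delta_\Omega=(\delta_{ij})$. With $C_1=2\mathscr{F}_\Omega(\delta_{22}\mathscr{L}_\Omega-\delta_{12}\mathscr{M}_{1\Omega})-\mathscr{E}_\Omega\mathcal{M}$, $C_2=2\mathscr{G}_\Omega(\delta_{22}\mathscr{L}_\Omega-\delta_{12}\mathscr{M}_{1\Omega})-2\mathscr{E}_\Omega(\delta_{11}\mathscr{N}_\Omega-\delta_{21}\mathscr{M}_{2\Omega})$, $C_3=\mathscr{G}_\Omega\mathcal{M}-2\mathscr{F}_\Omega(\delta_{11}\mathscr{N}_\Omega-\delta_{21}\mathscr{M}_{2\Omega})$, where $\mathcal{M}=\delta_{11}\mathscr{M}_{1\Omega}-\delta_{21}\mathscr{L}_\Omega+\delta_{22}\mathscr{M}_{2\Omega}-\delta_{12}\mathscr{N}_\Omega$, the discriminant $\mathcal{D}=C_2^2-4C_1C_3$ of the equation $C_1b_1^2+C_2b_1b_2+C_3b_2^2=0$ is non-negative at every point of $U$, and $\mathcal{D}=0$ at a point if and only if $C_1=C_2=C_3=0$ at that point.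
   Context: A frontal is a smooth map $f:U\to\mathbb{R}^3$ admitting locally a smooth unit vector field orthogonal to $f_{u_1},f_{u_2}$; proper means its singular set has empty interior. A tangent moving basis of $\xi$ is a smooth $\Omega=(w_1\ w_2):U\to M_{3\times2}(\mathbb{R})$ with linearly independent columns whose span contains $\xi_{u_1},\xi_{u_2}$; then $D\xi=\Omega\Delta_\Omega^T$ for a unique smooth $\Delta_\Omega$. Coefficients: $\mathscr{E}_\Omega=\langle w_1,w_1\rangle$, $\mathscr{F}_\Omega=\langle w_1,w_2\rangle$, $\mathscr{G}_\Omega=\langle w_2,w_2\rangle$, $\mathscr{L}_\Omega=-\langle x_{u_1},w_1\rangle$, $\mathscr{M}_{2\Omega}=-\langle x_{u_1},w_2\rangle$, $\mathscr{M}_{1\Omega}=-\langle x_{u_2},w_1\rangle$, $\mathscr{N}_\Omega=-\langle x_{u_2},w_2\rangle$. *)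

theory Defs
  imports "HOL-Analysis.Analysis"
begin

definition pd :: "2 \<Rightarrow> (real^2 \<Rightarrow> 'b::real_normed_vector) \<Rightarrow> real^2 \<Rightarrow> 'b" where
  "pd i f p = frechet_derivative f (at p) (axis i 1)"

fun iter_pd :: "2 list \<Rightarrow> (real^2 \<Rightarrow> 'b::real_normed_vector) \<Rightarrow> real^2 \<Rightarrow> 'b" where
  "iter_pd [] f = f"
| "iter_pd (i # is) f = pd i (iter_pd is f)"

definition smooth_on :: "(real^2) set \<Rightarrow> (real^2 \<Rightarrow> 'b::real_normed_vector) \<Rightarrow> bool" where
  "smooth_on U f \<longleftrightarrow> (\<forall>is. iter_pd is f differentiable_on U)"

definition frontal :: "(real^2) set \<Rightarrow> (real^2 \<Rightarrow> real^3) \<Rightarrow> bool" where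
  "frontal U f \<longleftrightarrow> smooth_on U f \<and>
     (\<forall>p\<in>U. \<exists>V \<nu>. open V \<and> p \<in> V \<and> V \<subseteq> U \<and> smooth_on V \<nu> \<and>
        (\<forall>q\<in>V. norm (\<nu> q) = 1 \<and> \<nu> q \<bullet> pd 1 f q = 0 \<and> \<nu> q \<bullet> pd 2 f q = 0))"

definition singular_set :: "(real^2) set \<Rightarrow> (real^2 \<Rightarrow> real^3) \<Rightarrow> (real^2) set" where
  "singular_set U f = {p\<in>U. \<not> inj (frechet_derivative f (at p))}"

definition proper_frontal :: "(real^2) set \<Rightarrow> (real^2 \<Rightarrow> real^3) \<Rightarrow> bool" where
  "proper_frontal U f \<longleftrightarrow> frontal U f \<and> interior (singular_set U f) = {}"

definition tangent_moving_basis ::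
  "(real^2) set \<Rightarrow> (real^2 \<Rightarrow> real^3) \<Rightarrow> (real^2 \<Rightarrow> real^3) \<Rightarrow> (real^2 \<Rightarrow> real^3) \<Rightarrow> bool" where
  "tangent_moving_basis U \<xi> w1 w2 \<longleftrightarrow> smooth_on U w1 \<and> smooth_on U w2 \<and>
     (\<forall>p\<in>U. (\<forall>a b. a *\<^sub>R w1 p + b *\<^sub>R w2 p = 0 \<longrightarrow> a = 0 \<and> b = 0) \<and>
             pd 1 \<xi> p \<in> span {w1 p, w2 p} \<and> pd 2 \<xi> p \<in> span {w1 p, w2 p})"

end

theory Submission
  imports Defs
begin

text \<open>The claim is pointwise linear algebra; of the hypotheses only the linear independence of
  \<open>w1 p\<close> and \<open>w2 p\<close> is used. It makes the first fundamental form positive definite,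
  \<open>E > 0\<close> and \<open>W = EG - F\<^sup>2 > 0\<close>, and the coefficients satisfy
  \<open>E\<^sup>2 D = (E C\<^sub>2 - 2F C\<^sub>1)\<^sup>2 + 4W C\<^sub>1\<^sup>2\<close> and
  \<open>G\<^sup>2 D = (G C\<^sub>2 - 2F C\<^sub>3)\<^sup>2 + 4W C\<^sub>3\<^sup>2\<close>.
  Hence \<open>D \<ge> 0\<close>, and \<open>D = 0\<close> forces \<open>C\<^sub>1 = C\<^sub>2 = C\<^sub>3 = 0\<close>.\<close>

lemma gram_det_pos:
  fixes u v :: "'a::real_inner"
  assumes indep: "\<forall>a b. a *\<^sub>R u + b *\<^sub>R v = 0 \<longrightarrow> a = 0 \<and> b = 0"
  shows "(u \<bullet> u) * (v \<bullet> v) - (u \<bullet> v)\<^sup>2 > 0"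
proof -
  have "v \<noteq> 0"
    using indep[rule_format, of 0 1] by auto
  then have vv: "v \<bullet> v > 0"
    by simp
  define r where "r = (v \<bullet> v) *\<^sub>R u - (u \<bullet> v) *\<^sub>R v"
  have "r \<noteq> 0"
    using indep[rule_format, of "v \<bullet> v" "- (u \<bullet> v)"] vv by (auto simp: r_def)
  then have "r \<bullet> r > 0"
    by simp
  moreover have "r \<bullet> r = (v \<bullet> v) * ((u \<bullet> u) * (v \<bullet> v) - (u \<bullet> v)\<^sup>2)"
    by (simp add: r_def inner_diff_left algebra_simps power2_eq_square inner_commute)
  ultimately show ?thesis
    using vv by (simp add: zero_less_mult_iff)
qed

lemma weighted_sum_squares_eq_0_iff:
  fixes a b w :: "'a::linordered_idom"
  assumes "w > 0"
  shows "a\<^sup>2 + w * b\<^sup>2 = 0 \<longleftrightarrow> a = 0 \<and> b = 0"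
proof -
  have "a\<^sup>2 \<ge> 0" "w * b\<^sup>2 \<ge> 0"
    using assms by simp_all
  then have "a\<^sup>2 + w * b\<^sup>2 = 0 \<longleftrightarrow> a\<^sup>2 = 0 \<and> w * b\<^sup>2 = 0"
    by (rule add_nonneg_eq_0_iff)
  then show ?thesis
    using assms by simp
qed

lemma discriminant_nonneg_eq_0_iff:
  fixes E F G A B M :: real
  assumes E: "E > 0" and gram: "E * G - F\<^sup>2 > 0"
  defines "C1 \<equiv> 2 * F * A - E * M"
    and "C2 \<equiv> 2 * G * A - 2 * E * B"
    and "C3 \<equiv> G * M - 2 * F * B"
  shows "C2\<^sup>2 - 4 * C1 * C3 \<ge> 0 \<and>
    (C2\<^sup>2 - 4 * C1 * C3 = 0 \<longleftrightarrow> C1 = 0 \<and> C2 = 0 \<and> C3 = 0)"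
proof -
  define D where "D = C2\<^sup>2 - 4 * C1 * C3"
  define W where "W = E * G - F\<^sup>2"
  have W_pos: "4 * W > 0"
    using gram by (simp add: W_def)
  have D_E: "E\<^sup>2 * D = (E * C2 - 2 * F * C1)\<^sup>2 + 4 * W * C1\<^sup>2"
    by (simp add: D_def W_def C1_def C2_def C3_def algebra_simps power2_eq_square)
  have D_G: "G\<^sup>2 * D = (G * C2 - 2 * F * C3)\<^sup>2 + 4 * W * C3\<^sup>2"
    by (simp add: D_def W_def C1_def C2_def C3_def algebra_simps power2_eq_square)
  have "E\<^sup>2 * D \<ge> 0"
    unfolding D_E using W_pos by simp
  then have "D \<ge> 0"
    using E by (simp add: zero_le_mult_iff)
  moreover have "C1 = 0 \<and> C2 = 0 \<and> C3 = 0" if "D = 0"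
  proof -
    have "E * C2 - 2 * F * C1 = 0" and C1: "C1 = 0"
      using D_E that weighted_sum_squares_eq_0_iff[OF W_pos] by simp_all
    then have "C2 = 0"
      using E by simp
    moreover have "C3 = 0"
      using D_G that weighted_sum_squares_eq_0_iff[OF W_pos] by simp
    ultimately show ?thesis
      using C1 by simp
  qed
  moreover have "D = 0" if "C1 = 0 \<and> C2 = 0 \<and> C3 = 0"
    using that by (simp add: D_def)
  ultimately show ?thesis
    unfolding D_def[symmetric] by blast
qed

theorem proposition4p5:
  fixes U :: "(real^2) set"
    and x \<xi> w1 w2 :: "real^2 \<Rightarrow> real^3"
    and \<Delta> :: "real^2 \<Rightarrow> real^2^2"
  assumes "open U"
    and "smooth_on U x"
    and "\<forall>p\<in>U. norm (\<xi> p) = 1"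
    and "proper_frontal U \<xi>"
    and "tangent_moving_basis U \<xi> w1 w2"
    and "\<forall>i j. smooth_on U (\<lambda>p. \<Delta> p $ i $ j)"
    and "\<forall>p\<in>U. \<forall>j. pd j \<xi> p = (\<Delta> p $ j $ 1) *\<^sub>R w1 p + (\<Delta> p $ j $ 2) *\<^sub>R w2 p"
  shows "\<forall>p\<in>U.
    (let E = w1 p \<bullet> w1 p; F = w1 p \<bullet> w2 p; G = w2 p \<bullet> w2 p;
         L = - (pd 1 x p \<bullet> w1 p); M2 = - (pd 1 x p \<bullet> w2 p);
         M1 = - (pd 2 x p \<bullet> w1 p); N = - (pd 2 x p \<bullet> w2 p);
         d11 = \<Delta> p $ 1 $ 1; d12 = \<Delta> p $ 1 $ 2; d21 = \<Delta> p $ 2 $ 1; d22 = \<Delta> p $ 2 $ 2;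
         M = d11 * M1 - d21 * L + d22 * M2 - d12 * N;
         C1 = 2 * F * (d22 * L - d12 * M1) - E * M;
         C2 = 2 * G * (d22 * L - d12 * M1) - 2 * E * (d11 * N - d21 * M2);
         C3 = G * M - 2 * F * (d11 * N - d21 * M2);
         D = C2\<^sup>2 - 4 * C1 * C3
     in D \<ge> 0 \<and> (D = 0 \<longleftrightarrow> C1 = 0 \<and> C2 = 0 \<and> C3 = 0))"
proof -
  have w_pos: "w1 p \<bullet> w1 p > 0"
    and gram_pos: "(w1 p \<bullet> w1 p) * (w2 p \<bullet> w2 p) - (w1 p \<bullet> w2 p)\<^sup>2 > 0"
    if "p \<in> U" for p
  proof -
    have indep: "\<forall>a b. a *\<^sub>R w1 p + b *\<^sub>R w2 p = 0 \<longrightarrow> a = 0 \<and> b = 0"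
      using assms(5) that by (simp add: tangent_moving_basis_def)
    have "w1 p \<noteq> 0"
      using indep[rule_format, of 1 0] by auto
    then show "w1 p \<bullet> w1 p > 0"
      by simp
    show "(w1 p \<bullet> w1 p) * (w2 p \<bullet> w2 p) - (w1 p \<bullet> w2 p)\<^sup>2 > 0"
      using indep by (rule gram_det_pos)
  qed
  show ?thesis
    unfolding Let_def using discriminant_nonneg_eq_0_iff[OF w_pos gram_pos] by blast
qed

end
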